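(* Let $\Theta\subseteq\mathbb{R}^p$ be convex, and let $f:\mathbb{R}^p\to\mathbb{R}$ be continuous, convex and bounded below, with a minimizer $\theta^\star$ on $\Theta$; set $f^\star\triangleq f(\theta^\star)$. Let $\theta_0\in\Theta$ and consider the sequence generated by: for $n\ge1$, choose $g_n\in\mathcal{S}_{L,\rho}(f,\theta_{n-1})$ with $\rho\ge L$ and set $\theta_n\in\operatorname{arg\,min}_{\theta\in\Theta}g_n(\theta)$. Then for all $n\ge1$, $$f(\theta_n)-f^\star\le\frac{L\|\theta_0-\theta^\star\|_2^2}{2n}.$$ If moreover $f$ is $\mu$-strongly convex, then for all $n\ge1$, $$\|\theta_n-\theta^\star\|_2^2\le\Big(\frac{L}{\rho+\mu}\Big)^n\|\theta_0-\theta^\star\|_2^2,\qquad f(\theta_n)-f^\star\le\Big(\frac{L}{\rho+\mu}\Big)^{n-1}\frac{L\|\theta_0-\theta^\star\|_2^2}{2}.$$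
   Context: First-order surrogates: given convex $\Theta\subseteq\mathbb{R}^p$, $g:\mathbb{R}^p\to\mathbb{R}$ belongs to $\mathcal{S}_L(f,\kappa)$ if (a) $g(\theta')\ge f(\theta')$ for all $\theta'\in\operatorname{arg\,min}_{\theta\in\Theta}g(\theta)$, and (b) $h\triangleq g-f$ is differentiable on $\mathbb{R}^p$ with $L$-Lipschitz gradient, $h(\kappa)=0$ and $\nabla h(\kappa)=0$. $\mathcal{S}_{L,\rho}(f,\kappa)$ is the subset of $\rho$-strongly convex elements of $\mathcal{S}_L(f,\kappa)$. The minimizers $\theta_n$ are assumed to exist. *)

theory Defs
  imports "HOL-Analysis.Analysis"
begin

definition argmin_on :: "'a set \<Rightarrow> ('a \<Rightarrow> real) \<Rightarrow> 'a set" where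
  "argmin_on Theta g = {x \<in> Theta. \<forall>y \<in> Theta. g x \<le> g y}"

definition strongly_convex :: "real \<Rightarrow> ('a::real_normed_vector \<Rightarrow> real) \<Rightarrow> bool" where
  "strongly_convex mu f \<longleftrightarrow>
     (\<forall>x y. \<forall>t::real. 0 \<le> t \<and> t \<le> 1 \<longrightarrow>
        f (t *\<^sub>R x + (1 - t) *\<^sub>R y)
          \<le> t * f x + (1 - t) * f y - mu / 2 * t * (1 - t) * (norm (x - y))\<^sup>2)"

definition first_order_surrogate ::
  "'a::euclidean_space set \<Rightarrow> real \<Rightarrow> ('a \<Rightarrow> real) \<Rightarrow> 'a \<Rightarrow> ('a \<Rightarrow> real) \<Rightarrow> bool" where
  "first_order_surrogate Theta L f kappa g \<longleftrightarrow>
     (\<forall>x \<in> argmin_on Theta g. f x \<le> g x) \<and>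
     (\<exists>gradh :: 'a \<Rightarrow> 'a.
        (\<forall>x. ((\<lambda>y. g y - f y) has_derivative (\<lambda>v. gradh x \<bullet> v)) (at x)) \<and>
        L-lipschitz_on UNIV gradh \<and>
        g kappa - f kappa = 0 \<and> gradh kappa = 0)"

definition sc_surrogate ::
  "'a::euclidean_space set \<Rightarrow> real \<Rightarrow> real \<Rightarrow> ('a \<Rightarrow> real) \<Rightarrow> 'a \<Rightarrow> ('a \<Rightarrow> real) \<Rightarrow> bool" where
  "sc_surrogate Theta L rho f kappa g \<longleftrightarrow>
     first_order_surrogate Theta L f kappa g \<and> strongly_convex rho g"

end

theory Submission imports Defs begin

text \<open>Every surrogate step satisfies, for all \<open>y \<in> \<Theta>\<close>,
  \<open>f(\<theta>\<^sub>n) + \<rho>/2 \<parallel>y - \<theta>\<^sub>n\<parallel>\<^sup>2 \<le> f(y) + L/2 \<parallel>y - \<theta>\<^sub>n\<^sub>-\<^sub>1\<parallel>\<^sup>2\<close>: the left side comes from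
  \<open>f \<le> g\<^sub>n\<close> at \<open>\<theta>\<^sub>n\<close> and the quadratic growth of the strongly convex \<open>g\<^sub>n\<close> around its
  minimizer, the right side from the bound \<open>g\<^sub>n - f \<le> L/2 \<parallel>\<cdot> - \<theta>\<^sub>n\<^sub>-\<^sub>1\<parallel>\<^sup>2\<close> on an
  approximation error with vanishing value and gradient at \<open>\<theta>\<^sub>n\<^sub>-\<^sub>1\<close>.
  Taking \<open>y = \<theta>\<^sub>n\<^sub>-\<^sub>1\<close> shows that \<open>f(\<theta>\<^sub>n)\<close> decreases; taking \<open>y = \<theta>\<^sup>\<star>\<close> and using
  \<open>\<rho> \<ge> L\<close>, the gaps \<open>f(\<theta>\<^sub>k) - f\<^sup>\<star>\<close> telescope against \<open>L/2 \<parallel>\<theta>\<^sub>k - \<theta>\<^sup>\<star>\<parallel>\<^sup>2\<close>, giving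
  the \<open>1/n\<close> rate. Under \<open>\<mu>\<close>-strong convexity of \<open>f\<close> one also has
  \<open>f(\<theta>\<^sub>n) \<ge> f\<^sup>\<star> + \<mu>/2 \<parallel>\<theta>\<^sub>n - \<theta>\<^sup>\<star>\<parallel>\<^sup>2\<close>, so the distances contract by \<open>L/(\<rho>+\<mu>)\<close>.\<close>

lemma argmin_on_strongly_convex_quadratic_growth:
  fixes g :: "'a::real_normed_vector \<Rightarrow> real"
  assumes sc: "strongly_convex rho g" and rho: "rho \<ge> 0" and cv: "convex Theta"
    and xm: "x \<in> argmin_on Theta g" and y: "y \<in> Theta"
  shows "g x + rho / 2 * (norm (y - x))\<^sup>2 \<le> g y"
proof -
  have x: "x \<in> Theta" and xmin: "\<And>z. z \<in> Theta \<Longrightarrow> g x \<le> g z"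
    using xm by (auto simp: argmin_on_def)
  define a where "a = g y - g x"
  define b where "b = rho / 2 * (norm (y - x))\<^sup>2"
  have along_segment: "b * (1 - t) \<le> a" if t: "0 < t" "t \<le> 1" for t
  proof -
    have "t *\<^sub>R y + (1 - t) *\<^sub>R x \<in> Theta"
      using cv x y t by (simp add: convex_def)
    then have "g x \<le> g (t *\<^sub>R y + (1 - t) *\<^sub>R x)" by (rule xmin)
    also have "\<dots> \<le> t * g y + (1 - t) * g x - rho / 2 * t * (1 - t) * (norm (y - x))\<^sup>2"
      using sc t unfolding strongly_convex_def by auto
    finally have "t * (b * (1 - t)) \<le> t * a"
      by (simp add: a_def b_def algebra_simps)
    then show ?thesis using t by simp
  qed
  have "b \<le> a"
  proof (rule ccontr)
    assume "\<not> b \<le> a"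
    moreover have "a \<ge> 0" using along_segment[of 1] by simp
    ultimately have ab: "0 \<le> a" "a < b" by auto
    define t where "t = (b - a) / (2 * b)"
    have "0 < t" "t \<le> 1" "b * (1 - t) = (a + b) / 2"
      using ab by (simp_all add: t_def field_simps)
    with along_segment ab show False by fastforce
  qed
  then show ?thesis by (simp add: a_def b_def)
qed

lemma quadratic_bound_flat_lipschitz_gradient:
  fixes h :: "'a::real_inner \<Rightarrow> real"
  assumes deriv: "\<And>x. (h has_derivative (\<lambda>v. gradh x \<bullet> v)) (at x)"
    and lip: "L-lipschitz_on UNIV gradh"
    and h0: "h k = 0" and gradh0: "gradh k = 0"
  shows "h x \<le> L / 2 * (norm (x - k))\<^sup>2"
proof -
  define d where "d = x - k"
  define phi where "phi t = h (k + t *\<^sub>R d) - L / 2 * t\<^sup>2 * (norm d)\<^sup>2" for t :: real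
  have "phi 1 \<le> phi 0"
  proof (rule DERIV_nonpos_imp_nonincreasing[of 0 1])
    fix t :: real assume t: "0 \<le> t" "t \<le> 1"
    have "((\<lambda>t. k + t *\<^sub>R d) has_derivative (\<lambda>s. s *\<^sub>R d)) (at t)"
      by (auto intro!: derivative_eq_intros)
    from has_derivative_compose[OF this deriv]
    have "((\<lambda>t. h (k + t *\<^sub>R d)) has_real_derivative (gradh (k + t *\<^sub>R d) \<bullet> d)) (at t)"
      by (simp add: has_field_derivative_def mult_commute_abs)
    then have "(phi has_real_derivative (gradh (k + t *\<^sub>R d) \<bullet> d - L * t * (norm d)\<^sup>2)) (at t)"
      unfolding phi_def by (auto intro!: derivative_eq_intros)
    moreover have "gradh (k + t *\<^sub>R d) \<bullet> d \<le> L * t * (norm d)\<^sup>2"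
    proof -
      have "gradh (k + t *\<^sub>R d) \<bullet> d = (gradh (k + t *\<^sub>R d) - gradh k) \<bullet> d"
        using gradh0 by simp
      also have "\<dots> \<le> norm (gradh (k + t *\<^sub>R d) - gradh k) * norm d"
        by (rule norm_cauchy_schwarz)
      also have "\<dots> \<le> (L * dist (k + t *\<^sub>R d) k) * norm d"
        using lipschitz_onD[OF lip, of "k + t *\<^sub>R d" k]
        by (intro mult_right_mono) (auto simp: dist_norm)
      also have "\<dots> = L * t * (norm d)\<^sup>2"
        using t by (simp add: dist_norm power2_eq_square)
      finally show ?thesis .
    qed
    ultimately show "\<exists>y. (phi has_real_derivative y) (at t) \<and> y \<le> 0"
      by (intro exI[of _ "gradh (k + t *\<^sub>R d) \<bullet> d - L * t * (norm d)\<^sup>2"]) simp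
  qed simp
  then show ?thesis using h0 by (simp add: phi_def d_def)
qed

lemma first_order_surrogate_lipschitz_nonneg:
  assumes "first_order_surrogate Theta L f kappa g"
  shows "L \<ge> 0"
  using assms unfolding first_order_surrogate_def by (auto dest: lipschitz_on_nonneg)

lemma first_order_surrogate_approximation_error:
  assumes "first_order_surrogate Theta L f kappa g"
  shows "g y - f y \<le> L / 2 * (norm (y - kappa))\<^sup>2"
proof -
  obtain gradh where "\<And>x. ((\<lambda>y. g y - f y) has_derivative (\<lambda>v. gradh x \<bullet> v)) (at x)"
    "L-lipschitz_on UNIV gradh" "g kappa - f kappa = 0" "gradh kappa = 0"
    using assms unfolding first_order_surrogate_def by blast
  from quadratic_bound_flat_lipschitz_gradient[OF this] show ?thesis by simp
qed

lemma sc_surrogate_argmin_step: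
  assumes surr: "sc_surrogate Theta L rho f kappa g" and rho: "rho \<ge> 0"
    and cv: "convex Theta" and xm: "x \<in> argmin_on Theta g" and y: "y \<in> Theta"
  shows "f x + rho / 2 * (norm (y - x))\<^sup>2 \<le> f y + L / 2 * (norm (y - kappa))\<^sup>2"
proof -
  have sc: "strongly_convex rho g" and fo: "first_order_surrogate Theta L f kappa g"
    using surr by (auto simp: sc_surrogate_def)
  have "f x \<le> g x" using fo xm by (auto simp: first_order_surrogate_def)
  moreover have "g x + rho / 2 * (norm (y - x))\<^sup>2 \<le> g y"
    by (rule argmin_on_strongly_convex_quadratic_growth[OF sc rho cv xm y])
  moreover have "g y - f y \<le> L / 2 * (norm (y - kappa))\<^sup>2"
    by (rule first_order_surrogate_approximation_error[OF fo])
  ultimately show ?thesis by linarith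
qed

lemma telescoping_decreasing_bound:
  fixes e D :: "nat \<Rightarrow> real"
  assumes dec: "\<And>k. e (Suc k) \<le> e k"
    and tele: "\<And>k. e (Suc k) \<le> c * (D k - D (Suc k))"
    and D: "\<And>k. D k \<ge> 0" and c: "c \<ge> 0"
  shows "real n * e n \<le> c * D 0"
proof -
  have "real n * e n = (\<Sum>k<n. e n)" by simp
  also have "\<dots> \<le> (\<Sum>k<n. e (Suc k))"
    by (intro sum_mono lift_Suc_antimono_le[of e, OF dec]) simp
  also have "\<dots> \<le> (\<Sum>k<n. c * (D k - D (Suc k)))"
    by (intro sum_mono tele)
  also have "\<dots> = c * (D 0 - D n)"
    by (simp add: sum_distrib_left[symmetric] sum_lessThan_telescope')
  also have "\<dots> \<le> c * D 0"
    using c D[of n] by (simp add: mult_left_mono)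
  finally show ?thesis .
qed

lemma geometric_decay_bound:
  fixes D :: "nat \<Rightarrow> real"
  assumes step: "\<And>k. D (Suc k) \<le> q * D k" and q: "q \<ge> 0"
  shows "D n \<le> q ^ n * D 0"
proof (induction n)
  case (Suc n)
  have "D (Suc n) \<le> q * D n" by (rule step)
  also have "\<dots> \<le> q * (q ^ n * D 0)" using Suc.IH q by (rule mult_left_mono)
  finally show ?case by simp
qed simp

lemma surrogate_iteration_sublinear_rate:
  fixes f :: "'a::real_normed_vector \<Rightarrow> real"
  assumes step: "\<And>n y. y \<in> Theta \<Longrightarrow>
      f (theta (Suc n)) + rho / 2 * (norm (y - theta (Suc n)))\<^sup>2
        \<le> f y + L / 2 * (norm (y - theta n))\<^sup>2"
    and mem: "\<And>n. theta n \<in> Theta" and y: "y \<in> Theta"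
    and L: "L \<ge> 0" and rho: "rho \<ge> L" and n: "n \<ge> 1"
  shows "f (theta n) - f y \<le> L * (norm (theta 0 - y))\<^sup>2 / (2 * real n)"
proof -
  define D where "D k = (norm (theta k - y))\<^sup>2" for k
  have "real n * (f (theta n) - f y) \<le> L / 2 * D 0"
  proof (rule telescoping_decreasing_bound)
    fix k
    have "0 \<le> rho / 2 * (norm (theta k - theta (Suc k)))\<^sup>2" using L rho by simp
    then show "f (theta (Suc k)) - f y \<le> f (theta k) - f y"
      using step[OF mem[of k], of k] by simp
    have "L / 2 * D (Suc k) \<le> rho / 2 * D (Suc k)"
      using rho by (intro mult_right_mono) (auto simp: D_def)
    with step[OF y, of k] show "f (theta (Suc k)) - f y \<le> L / 2 * (D k - D (Suc k))"
      by (simp add: D_def norm_minus_commute algebra_simps)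
  qed (use L in \<open>auto simp: D_def\<close>)
  then show ?thesis using n by (simp add: D_def field_simps)
qed

lemma surrogate_iteration_linear_rate:
  fixes f :: "'a::real_normed_vector \<Rightarrow> real"
  assumes step: "\<And>n y. y \<in> Theta \<Longrightarrow>
      f (theta (Suc n)) + rho / 2 * (norm (y - theta (Suc n)))\<^sup>2
        \<le> f y + L / 2 * (norm (y - theta n))\<^sup>2"
    and mem: "\<And>n. theta n \<in> Theta" and cv: "convex Theta"
    and thstar: "thstar \<in> argmin_on Theta f"
    and mu: "mu > 0" and scf: "strongly_convex mu f"
    and L: "L \<ge> 0" and rho: "rho \<ge> 0" and n: "n \<ge> 1"
  shows "(norm (theta n - thstar))\<^sup>2 \<le> (L / (rho + mu)) ^ n * (norm (theta 0 - thstar))\<^sup>2"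
    and "f (theta n) - f thstar \<le> (L / (rho + mu)) ^ (n - 1) * (L * (norm (theta 0 - thstar))\<^sup>2 / 2)"
proof -
  define D where "D k = (norm (theta k - thstar))\<^sup>2" for k
  define q where "q = L / (rho + mu)"
  have star: "thstar \<in> Theta" using thstar by (simp add: argmin_on_def)
  have step_star: "f (theta (Suc k)) - f thstar + rho / 2 * D (Suc k) \<le> L / 2 * D k" for k
    using step[OF star, of k] by (simp add: D_def norm_minus_commute)
  have growth: "f thstar + mu / 2 * D k \<le> f (theta k)" for k
    using argmin_on_strongly_convex_quadratic_growth[OF scf _ cv thstar mem[of k]] mu
    by (simp add: D_def)
  have D_geometric: "D k \<le> q ^ k * D 0" for k
  proof (rule geometric_decay_bound)
    fix k
    have "(rho + mu) * D (Suc k) \<le> L * D k"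
      using step_star[of k] growth[of "Suc k"] by (simp add: algebra_simps)
    then show "D (Suc k) \<le> q * D k" using rho mu by (simp add: q_def field_simps)
  qed (use L rho mu in \<open>simp add: q_def\<close>)
  then show "(norm (theta n - thstar))\<^sup>2 \<le> q ^ n * (norm (theta 0 - thstar))\<^sup>2"
    by (simp add: D_def)
  obtain m where m: "n = Suc m" using n by (cases n) auto
  have "0 \<le> rho / 2 * D n" using rho by (simp add: D_def)
  then have "f (theta n) - f thstar \<le> L / 2 * D m"
    using step_star[of m] m by simp
  also have "\<dots> \<le> L / 2 * (q ^ m * D 0)"
    using D_geometric[of m] L by (intro mult_left_mono) auto
  finally show "f (theta n) - f thstar \<le> q ^ (n - 1) * (L * (norm (theta 0 - thstar))\<^sup>2 / 2)"
    by (simp add: m D_def algebra_simps)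
qed

theorem proposition2p3:
  fixes Theta :: "'a::euclidean_space set"
    and f :: "'a \<Rightarrow> real"
    and theta :: "nat \<Rightarrow> 'a"
    and g :: "nat \<Rightarrow> 'a \<Rightarrow> real"
    and thstar :: 'a
    and L rho :: real
  assumes "convex Theta"
    and "continuous_on UNIV f"
    and "convex_on UNIV f"
    and "bdd_below (range f)"
    and "thstar \<in> argmin_on Theta f"
    and "theta 0 \<in> Theta"
    and "rho \<ge> L"
    and "\<And>n. n \<ge> 1 \<Longrightarrow> sc_surrogate Theta L rho f (theta (n - 1)) (g n)"
    and "\<And>n. n \<ge> 1 \<Longrightarrow> theta n \<in> argmin_on Theta (g n)"
  shows "(\<forall>n\<ge>1. f (theta n) - f thstar \<le> L * (norm (theta 0 - thstar))\<^sup>2 / (2 * real n))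
    \<and> (\<forall>mu>0. strongly_convex mu f \<longrightarrow>
         (\<forall>n\<ge>1. (norm (theta n - thstar))\<^sup>2 \<le> (L / (rho + mu)) ^ n * (norm (theta 0 - thstar))\<^sup>2
                \<and> f (theta n) - f thstar
                    \<le> (L / (rho + mu)) ^ (n - 1) * (L * (norm (theta 0 - thstar))\<^sup>2 / 2)))"
proof -
  have surr: "sc_surrogate Theta L rho f (theta n) (g (Suc n))" for n
    using assms(8)[of "Suc n"] by simp
  have L: "L \<ge> 0"
    using surr[of 0] first_order_surrogate_lipschitz_nonneg by (auto simp: sc_surrogate_def)
  have rho: "rho \<ge> 0" using L assms(7) by simp
  have mem: "theta n \<in> Theta" for n
    using assms(6) assms(9)[of n] by (cases n) (auto simp: argmin_on_def)
  have step: "f (theta (Suc n)) + rho / 2 * (norm (y - theta (Suc n)))\<^sup>2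
      \<le> f y + L / 2 * (norm (y - theta n))\<^sup>2" if "y \<in> Theta" for n y
    using sc_surrogate_argmin_step[OF surr rho assms(1) assms(9) that] by simp
  have star: "thstar \<in> Theta" using assms(5) by (simp add: argmin_on_def)
  show ?thesis
    using surrogate_iteration_sublinear_rate[where f = f and theta = theta, OF step mem star L assms(7)]
      surrogate_iteration_linear_rate[where f = f and theta = theta, OF step mem assms(1) assms(5) _ _ L rho]
    by blast
qed

end
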